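(* Assume [H1]. Fix $x\in\mathcal G$ and $(y,\alpha)\in\Gamma[x]$, and let $(x_n)_n\subset\mathcal G$ with $\delta_n:=d(x_n,x)\to 0$. Then for all $n$ large enough (so that $\delta_n<T$) there exists $(y_n,\alpha_n)\in\Gamma[x_n]$ such that (i) $\sup_{s\in[0,T]} d(y_n(s),y(s))\le \delta_n+\|\alpha\|_2\sqrt{\delta_n}$ and $y_n(T)=y(T)$; (ii) $\|\alpha_n\|_2^2\le\|\alpha\|_2^2+\delta_n\big(1+\frac{\|\alpha\|_2^2}{T-\delta_n}\big)$; (iii) $\lim_{n\to\infty}J_0(x_n;(y_n,\alpha_n))=J_0(x;(y,\alpha))$.
   Context: Let $N\ge 2$, $d\ge 1$, and let $e_1,\dots,e_N\in\mathbb R^d$ be pairwise distinct unit vectors. Let $J_i=\{s e_i: s\ge 0\}$, $\mathcal G=\bigcup_{i=1}^N J_i$ and $O=0$. $\mathcal G$ carries the geodesic distance $d(x,y)=|x-y|$ if $x,y$ lie in a common $J_i$ and $d(x,y)=|x|+|y|$ otherwise. Fix $T>0$. For $i=0,\dots,N$ let $A_i=\{i\}\times\mathbb R$, $A=\bigcup_{i=0}^N A_i$ (disjoint union); for $a=(i,\bar a)$ write $|a|=|\bar a|$. Let $M=\{(x,a): x\in\mathcal G,\ a\in A_i \text{ if } x\in J_i\setminus\{O\},\ a\in A \text{ if } x=O\}$ and $f:M\to\mathbb R^d$, $f(x,(i,\bar a))=\bar a e_i$ for $i\ge 1$, $f(O,(0,\bar a))=0$. For $0\le t_1<t_2\le T$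 and $x\in\mathcal G$, $\Gamma_{t_1,t_2}[x]$ is the set of pairs $(y,\alpha)$ with $y\in W^{1,2}([t_1,t_2];\mathcal G)$, $\alpha:[t_1,t_2]\to A$ measurable, $(y(s),\alpha(s))\in M$ for a.e. $s$, $\int_{t_1}^{t_2}|\alpha|^2<\infty$, and $y(s)=x+\int_{t_1}^s f(y(\tau),\alpha(\tau))\,d\tau$ for all $s$. Write $\Gamma_t[x]=\Gamma_{t,T}[x]$, $\Gamma[x]=\Gamma_{0,T}[x]$, and $\|\alpha\|_2=(\int|\alpha|^2)^{1/2}$. [H1]: for $i=1,\dots,N$, $\ell_i:J_i\times[0,T]\to\mathbb R$ and $g_i:J_i\to\mathbb R$ are continuous and bounded; $\ell_*:[0,T]\to\mathbb R$ is continuous and bounded; $g_*\in\mathbb R$. Set $\ell_O(t)=\min\{\ell_*(t),\min_i\ell_i(O,t)\}$; $L(x,t)=\ell_i(x,t)$ if $x\in J_i\setminus\{O\}$, $L(O,t)=\ell_O(t)$; $g(x)=g_i(x)$ if $x\in J_i\setminus\{O\}$, $g(O)=\min\{g_*,\min_i g_i(O)\}$. For $(y,\alpha)\in\Gamma_t[x]$, $J_t(x;(y,\alpha))=\int_t^T\big(L(y(\tau),\tau)+\tfrac12|\alpha(\tau)|^2\big)d\tau+g(y(T))$. *)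

theory Defs
  imports "HOL-Analysis.Analysis"
begin

text \<open>Star-shaped network in R^d (d = DIM('a)). Edges are indexed by i in {1..N},
  with direction e i. Controls a = (i, abar) :: nat \<times> real; index 0 is the vertex control set.\<close>

definition ray :: "'a::euclidean_space \<Rightarrow> 'a set" where
  "ray v = {s *\<^sub>R v | s. s \<ge> 0}"

definition netw :: "(nat \<Rightarrow> 'a::euclidean_space) \<Rightarrow> nat \<Rightarrow> 'a set" where
  "netw e N = (\<Union>i\<in>{1..N}. ray (e i))"

definition gdist :: "(nat \<Rightarrow> 'a::euclidean_space) \<Rightarrow> nat \<Rightarrow> 'a \<Rightarrow> 'a \<Rightarrow> real" where
  "gdist e N x y =
     (if \<exists>i\<in>{1..N}. x \<in> ray (e i) \<and> y \<in> ray (e i) then norm (x - y) else norm x + norm y)"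

definition inM :: "(nat \<Rightarrow> 'a::euclidean_space) \<Rightarrow> nat \<Rightarrow> 'a \<Rightarrow> nat \<times> real \<Rightarrow> bool" where
  "inM e N x a \<longleftrightarrow> x \<in> netw e N \<and> fst a \<le> N \<and>
     (\<forall>i\<in>{1..N}. x \<in> ray (e i) - {0} \<longrightarrow> fst a = i)"

definition dyn :: "(nat \<Rightarrow> 'a::euclidean_space) \<Rightarrow> 'a \<Rightarrow> nat \<times> real \<Rightarrow> 'a" where
  "dyn e x a = (if fst a = 0 then 0 else snd a *\<^sub>R e (fst a))"

text \<open>admissible trajectories Gamma_{t1,t2}[x]. The W^{1,2} regularity of y is encoded
  by the integral equation with an integrable (indeed L^2) integrand.\<close>
definition Gamma :: "(nat \<Rightarrow> 'a::euclidean_space) \<Rightarrow> nat \<Rightarrow> real \<Rightarrow> real \<Rightarrow> 'a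
     \<Rightarrow> ((real \<Rightarrow> 'a) \<times> (real \<Rightarrow> nat \<times> real)) set" where
  "Gamma e N t1 t2 x = {(y, \<alpha>).
     (\<forall>s\<in>{t1..t2}. y s \<in> netw e N) \<and>
     (\<lambda>s. fst (\<alpha> s)) \<in> measurable (restrict_space lebesgue {t1..t2}) (count_space UNIV) \<and>
     (\<lambda>s. snd (\<alpha> s)) \<in> borel_measurable (restrict_space lebesgue {t1..t2}) \<and>
     (AE s in lebesgue. s \<in> {t1..t2} \<longrightarrow> inM e N (y s) (\<alpha> s)) \<and>
     set_integrable lebesgue {t1..t2} (\<lambda>s. (snd (\<alpha> s))\<^sup>2) \<and>
     (\<forall>s\<in>{t1..t2}. set_integrable lebesgue {t1..s} (\<lambda>\<tau>. dyn e (y \<tau>) (\<alpha> \<tau>)) \<and>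
        y s = x + (LINT \<tau>:{t1..s}|lebesgue. dyn e (y \<tau>) (\<alpha> \<tau>)))}"

definition L2norm :: "(real \<Rightarrow> nat \<times> real) \<Rightarrow> real \<Rightarrow> real \<Rightarrow> real" where
  "L2norm \<alpha> t1 t2 = sqrt (LINT s:{t1..t2}|lebesgue. (snd (\<alpha> s))\<^sup>2)"

definition edge_index :: "(nat \<Rightarrow> 'a::euclidean_space) \<Rightarrow> nat \<Rightarrow> 'a \<Rightarrow> nat" where
  "edge_index e N x = (THE i. (i \<in> {1..N} \<and> x \<in> ray (e i)))"

definition Lcost :: "(nat \<Rightarrow> 'a::euclidean_space) \<Rightarrow> nat \<Rightarrow> (nat \<Rightarrow> 'a \<Rightarrow> real \<Rightarrow> real)
     \<Rightarrow> (real \<Rightarrow> real) \<Rightarrow> 'a \<Rightarrow> real \<Rightarrow> real" where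
  "Lcost e N l lstar x t =
     (if x = 0 then min (lstar t) (Min ((\<lambda>i. l i 0 t) ` {1..N}))
      else l (edge_index e N x) x t)"

definition gcost :: "(nat \<Rightarrow> 'a::euclidean_space) \<Rightarrow> nat \<Rightarrow> (nat \<Rightarrow> 'a \<Rightarrow> real)
     \<Rightarrow> real \<Rightarrow> 'a \<Rightarrow> real" where
  "gcost e N g gstar x =
     (if x = 0 then min gstar (Min ((\<lambda>i. g i 0) ` {1..N}))
      else g (edge_index e N x) x)"

definition Jcost :: "(nat \<Rightarrow> 'a::euclidean_space) \<Rightarrow> nat \<Rightarrow> (nat \<Rightarrow> 'a \<Rightarrow> real \<Rightarrow> real)
     \<Rightarrow> (real \<Rightarrow> real) \<Rightarrow> (nat \<Rightarrow> 'a \<Rightarrow> real) \<Rightarrow> real \<Rightarrow> real \<Rightarrow> real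
     \<Rightarrow> (real \<Rightarrow> 'a) \<times> (real \<Rightarrow> nat \<times> real) \<Rightarrow> real" where
  "Jcost e N l lstar g gstar T t p =
     (LINT \<tau>:{t..T}|lebesgue. Lcost e N l lstar (fst p \<tau>) \<tau> + 1/2 * (snd (snd p \<tau>))\<^sup>2)
     + gcost e N g gstar (fst p T)"

end

theory Submission
  imports Defs
begin

(* Steer x_n to x along the network geodesic at unit speed, which takes time delta_n = d(x_n, x),
   and then run the given trajectory accelerated by the factor c_n = T / (T - delta_n), so that it
   ends at y(T) exactly at time T.  By Cauchy-Schwarz the accelerated part stays within
   sqrt delta_n * ||alpha||_2 of y; its energy is c_n ||alpha||_2^2, and its running cost is
   1/c_n times that of y evaluated at the shifted times delta_n + tau / c_n, which converges by
   dominated convergence.  The geodesic part contributes O(delta_n) to both costs. *)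

section \<open>Measure and integration on real intervals\<close>

lemma AE_lebesgue_real_affine:
  fixes c t :: real
  assumes c: "c \<noteq> 0" and P: "AE x in lebesgue. P x"
  shows "AE x in lebesgue. P (t + c * x)"
proof -
  from P obtain Z where PZ: "{x \<in> space lebesgue. \<not> P x} \<subseteq> Z"
    and "emeasure lebesgue Z = 0" "Z \<in> sets lebesgue"
    by (rule AE_E)
  hence Z: "Z \<in> null_sets lebesgue" by blast
  have "AE x in density (distr lebesgue lebesgue (\<lambda>x. t + c * x)) (\<lambda>_. ennreal \<bar>c\<bar>). x \<notin> Z"
    by (rule subst[OF lebesgue_real_affine[OF c], where P = "\<lambda>M. AE x in M. x \<notin> Z"])
      (rule AE_not_in[OF Z])
  hence "AE x in distr lebesgue lebesgue (\<lambda>x. t + c * x). x \<notin> Z"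
    using c by (simp add: AE_density)
  hence "AE x in lebesgue. t + c * x \<notin> Z"
    using c Z lebesgue_affine_measurable[where c = "\<lambda>_. c" and t = t]
    by (subst (asm) AE_distr_iff) (auto simp: Compl_eq[symmetric] Compl_in_sets_lebesgue)
  thus ?thesis using PZ by (auto elim: eventually_mono)
qed

lemma measurable_lebesgue_on_real_affine:
  fixes c d V :: real
  assumes c: "c > 0" and f: "f \<in> lebesgue_on {0..V} \<rightarrow>\<^sub>M M"
  shows "(\<lambda>s. f (c * (s - d))) \<in> lebesgue_on {d..d + V / c} \<rightarrow>\<^sub>M M"
proof -
  have "(\<lambda>s. - c * d + c * s) \<in> lebesgue \<rightarrow>\<^sub>M lebesgue"
    using lebesgue_affine_measurable[where c = "\<lambda>_. c" and t = "- c * d"] c by simp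
  hence "(\<lambda>s. c * (s - d)) \<in> lebesgue_on {d..d + V / c} \<rightarrow>\<^sub>M lebesgue_on {0..V}"
    using c by (intro measurable_restrict_space3) (auto simp: algebra_simps field_simps)
  thus ?thesis using f by (rule measurable_compose)
qed

lemma set_integral_real_affine:
  fixes F :: "real \<Rightarrow> 'b::euclidean_space" and c :: real
  assumes c: "c > 0"
  shows "set_integrable lebesgue {d..d + V / c} (\<lambda>s. F (c * (s - d)))
           \<longleftrightarrow> set_integrable lebesgue {0..V} F"
    and "(LINT s:{d..d + V / c}|lebesgue. F (c * (s - d))) = (1 / c) *\<^sub>R (LINT \<tau>:{0..V}|lebesgue. F \<tau>)"
proof -
  let ?f = "\<lambda>\<tau>. indicator {0..V} \<tau> *\<^sub>R F \<tau>"
  have "indicator {d..d + V / c} s = (indicator {0..V} (c * (s - d)) :: real)" for s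
    using c by (auto simp: indicator_def field_simps)
  hence eq: "(\<lambda>s. indicator {d..d + V / c} s *\<^sub>R F (c * (s - d))) = (\<lambda>s. ?f (- c * d + c * s))"
    by (auto simp: algebra_simps)
  show "set_integrable lebesgue {d..d + V / c} (\<lambda>s. F (c * (s - d)))
          \<longleftrightarrow> set_integrable lebesgue {0..V} F"
    unfolding set_integrable_def eq using lebesgue_integrable_real_affine_iff[of c ?f "- c * d"] c
    by simp
  have "(\<integral>s. ?f s \<partial>lebesgue) = \<bar>c\<bar> *\<^sub>R (\<integral>s. ?f (- c * d + c * s) \<partial>lebesgue)"
    using c by (intro lebesgue_integral_real_affine) simp
  thus "(LINT s:{d..d + V / c}|lebesgue. F (c * (s - d))) = (1 / c) *\<^sub>R (LINT \<tau>:{0..V}|lebesgue. F \<tau>)"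
    unfolding set_lebesgue_integral_def eq using c by simp
qed

lemma measurable_lebesgue_on_Icc_join:
  fixes a b c :: real
  assumes "f \<in> lebesgue_on {a..b} \<rightarrow>\<^sub>M M" and "g \<in> lebesgue_on {b..c} \<rightarrow>\<^sub>M M"
  shows "(\<lambda>s. if s \<le> b then f s else g s) \<in> lebesgue_on {a..c} \<rightarrow>\<^sub>M M"
proof -
  have restr: "restrict_space (lebesgue_on {a..c}) {s. P s} = lebesgue_on ({a..c} \<inter> {s. P s})"
    if "{s. P s} \<in> sets borel" for P :: "real \<Rightarrow> bool"
    using that by (subst restrict_restrict_space) (auto simp: Int_commute)
  have "{a..c} \<inter> {s. s \<le> b} \<subseteq> {a..b}" "{a..c} \<inter> {s. \<not> s \<le> b} \<subseteq> {b..c}" by auto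
  hence "f \<in> restrict_space (lebesgue_on {a..c}) {s. s \<le> b} \<rightarrow>\<^sub>M M"
    and "g \<in> restrict_space (lebesgue_on {a..c}) {s. \<not> s \<le> b} \<rightarrow>\<^sub>M M"
    using assms by (simp_all add: restr not_le measurable_restrict_mono)
  thus ?thesis by (subst measurable_If_restrict_space_iff) (auto simp: sets_restrict_space_iff)
qed

lemma set_integral_Ioc_eq_Icc:
  fixes f :: "real \<Rightarrow> 'b::euclidean_space"
  assumes "set_integrable lebesgue {a..b} f"
  shows "(LINT x:{a<..b}|lebesgue. f x) = (LINT x:{a..b}|lebesgue. f x)"
proof (rule set_integral_cong_set)
  have "set_integrable lebesgue {a<..b} f" by (rule set_integrable_subset[OF assms]) auto
  thus "set_borel_measurable lebesgue {a..b} f" "set_borel_measurable lebesgue {a<..b} f"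
    using assms by (simp_all add: set_integrable_def set_borel_measurable_def borel_measurable_integrable)
  have "AE x in lebesgue. x \<noteq> a" by (rule AE_I'[of "{a}"]) auto
  thus "AE x in lebesgue. x \<in> {a..b} \<longleftrightarrow> x \<in> {a<..b}" by eventually_elim auto
qed

lemma set_integral_Icc_join:
  fixes f g :: "real \<Rightarrow> 'b::euclidean_space"
  assumes f: "set_integrable lebesgue {a..b} f" and g: "set_integrable lebesgue {b..c} g"
    and "a \<le> b" "b \<le> c"
  shows "set_integrable lebesgue {a..c} (\<lambda>s. if s \<le> b then f s else g s)" (is ?int)
    and "(LINT s:{a..c}|lebesgue. if s \<le> b then f s else g s)
           = (LINT s:{a..b}|lebesgue. f s) + (LINT s:{b..c}|lebesgue. g s)" (is ?eq)
proof -
  let ?h = "\<lambda>s. if s \<le> b then f s else g s"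
  have split: "{a..c} = {a..b} \<union> {b<..c}" using assms by auto
  have hf: "set_integrable lebesgue {a..b} ?h"
    using f by (rule set_integrable_cong[THEN iffD1, rotated 3]) auto
  have g': "set_integrable lebesgue {b<..c} g" by (rule set_integrable_subset[OF g]) auto
  have hg: "set_integrable lebesgue {b<..c} ?h"
    using g' by (rule set_integrable_cong[THEN iffD1, rotated 3]) auto
  show ?int unfolding split using hf hg by (rule set_integrable_Un) auto
  have "(LINT s:{a..c}|lebesgue. ?h s) = (LINT s:{a..b}|lebesgue. ?h s) + (LINT s:{b<..c}|lebesgue. ?h s)"
    unfolding split by (rule set_integral_Un[OF _ hf hg]) auto
  also have "(LINT s:{a..b}|lebesgue. ?h s) = (LINT s:{a..b}|lebesgue. f s)"
    by (rule set_lebesgue_integral_cong) auto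
  also have "(LINT s:{b<..c}|lebesgue. ?h s) = (LINT s:{b<..c}|lebesgue. g s)"
    by (rule set_lebesgue_integral_cong) auto
  finally show ?eq using set_integral_Ioc_eq_Icc[OF g] by simp
qed

lemma set_integrable_abs_of_square:
  fixes f :: "real \<Rightarrow> real"
  assumes meas: "f \<in> borel_measurable (lebesgue_on {a..b})"
    and sq: "set_integrable lebesgue {a..b} (\<lambda>s. (f s)\<^sup>2)"
  shows "set_integrable lebesgue {a..b} (\<lambda>s. \<bar>f s\<bar>)"
proof (rule set_integrable_bound)
  show "set_integrable lebesgue {a..b} (\<lambda>s. 1 + (f s)\<^sup>2)"
    using sq by (intro set_integral_add) auto
  have "(\<lambda>s. \<bar>indicator {a..b} s * f s\<bar>) \<in> borel_measurable lebesgue"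
    using meas by (subst (asm) borel_measurable_restrict_space_iff) (auto intro: borel_measurable_abs)
  thus "set_borel_measurable lebesgue {a..b} (\<lambda>s. \<bar>f s\<bar>)"
    by (simp add: set_borel_measurable_def abs_mult)
  have "\<bar>r\<bar> \<le> 1 + r\<^sup>2" for r :: real
    using sum_squares_bound[of 1 "\<bar>r\<bar>"] by (simp add: power2_eq_square)
  thus "AE s in lebesgue. s \<in> {a..b} \<longrightarrow> norm \<bar>f s\<bar> \<le> norm (1 + (f s)\<^sup>2)"
    by (intro AE_I2) (auto simp: abs_of_nonneg add_nonneg_nonneg)
qed

lemma le_sqrt_mult_by_AM_GM:
  fixes A I L :: real
  assumes AM_GM: "\<And>\<epsilon>. \<epsilon> > 0 \<Longrightarrow> A \<le> I / (2 * \<epsilon>) + \<epsilon> * L / 2" and "I \<ge> 0" "L \<ge> 0"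
  shows "A \<le> sqrt (I * L)"
proof (cases "I > 0 \<and> L > 0")
  case True
  define \<epsilon> where "\<epsilon> = sqrt I / sqrt L"
  have "\<epsilon> > 0" "I / (2 * \<epsilon>) = sqrt I * sqrt L / 2" "\<epsilon> * L / 2 = sqrt I * sqrt L / 2"
    using True by (auto simp: \<epsilon>_def field_simps)
  thus ?thesis using AM_GM[of \<epsilon>] by (simp add: real_sqrt_mult)
next
  case False
  show ?thesis
  proof (rule ccontr)
    assume "\<not> A \<le> sqrt (I * L)"
    hence A: "A > 0" using False assms by auto
    have "I = 0 \<or> L = 0 \<and> I > 0" using False assms by auto
    thus False
    proof
      assume "I = 0"
      have "A \<le> A / (L + 1) * L / 2" using AM_GM[of "A / (L + 1)"] A \<open>L \<ge> 0\<close> \<open>I = 0\<close> by simp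
      also have "\<dots> < A"
        using A \<open>L \<ge> 0\<close> by (simp add: field_simps) (smt (verit) mult_nonneg_nonneg)
      finally show False by simp
    next
      assume "L = 0 \<and> I > 0"
      hence "A \<le> I / (2 * (I / A))" using AM_GM[of "I / A"] A by simp
      also have "\<dots> < A" using A \<open>L = 0 \<and> I > 0\<close> by simp
      finally show False by simp
    qed
  qed
qed

lemma set_integral_abs_le_sqrt:
  fixes f :: "real \<Rightarrow> real"
  assumes abs: "set_integrable lebesgue {u..w} (\<lambda>s. \<bar>f s\<bar>)"
    and sq: "set_integrable lebesgue {u..w} (\<lambda>s. (f s)\<^sup>2)" and "u \<le> w"
  shows "(LINT s:{u..w}|lebesgue. \<bar>f s\<bar>) \<le> sqrt ((LINT s:{u..w}|lebesgue. (f s)\<^sup>2) * (w - u))"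
proof (rule le_sqrt_mult_by_AM_GM)
  fix \<epsilon> :: real assume "\<epsilon> > 0"
  have "\<bar>r\<bar> \<le> r\<^sup>2 / (2 * \<epsilon>) + \<epsilon> / 2" for r :: real
  proof -
    have "2 * \<epsilon> * \<bar>r\<bar> \<le> r\<^sup>2 + \<epsilon>\<^sup>2"
      using sum_squares_bound[of "\<bar>r\<bar>" \<epsilon>] by (simp add: power2_eq_square algebra_simps)
    thus ?thesis using \<open>\<epsilon> > 0\<close> by (simp add: field_simps power2_eq_square)
  qed
  hence "(LINT s:{u..w}|lebesgue. \<bar>f s\<bar>) \<le> (LINT s:{u..w}|lebesgue. (f s)\<^sup>2 / (2 * \<epsilon>) + \<epsilon> / 2)"
    using abs sq by (intro set_integral_mono set_integral_add) auto
  also have "\<dots> = (LINT s:{u..w}|lebesgue. (f s)\<^sup>2) / (2 * \<epsilon>) + \<epsilon> * (w - u) / 2"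
    using sq \<open>u \<le> w\<close> by (subst set_integral_add(2)) (auto simp: set_integral_const)
  finally show "(LINT s:{u..w}|lebesgue. \<bar>f s\<bar>)
      \<le> (LINT s:{u..w}|lebesgue. (f s)\<^sup>2) / (2 * \<epsilon>) + \<epsilon> * (w - u) / 2" .
qed (use \<open>u \<le> w\<close> in \<open>auto simp: set_lebesgue_integral_def intro!: integral_nonneg_AE\<close>)

lemma continuous_on_Min_finite:
  fixes f :: "'i \<Rightarrow> 'b::topological_space \<Rightarrow> real"
  assumes "finite I" "I \<noteq> {}" "\<And>i. i \<in> I \<Longrightarrow> continuous_on S (f i)"
  shows "continuous_on S (\<lambda>t. Min ((\<lambda>i. f i t) ` I))"
  using assms
proof (induction I rule: finite_ne_induct)
  case (insert i I)
  have "continuous_on S (\<lambda>t. min (f i t) (Min ((\<lambda>i. f i t) ` I)))"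
    using insert by (intro continuous_on_min) auto
  thus ?case using insert by simp
qed simp

lemma borel_measurable_lebesgue_on_eq_continuous:
  assumes "continuous_on S f" "S \<in> sets lebesgue" "\<And>x. x \<in> S \<Longrightarrow> g x = f x"
  shows "g \<in> borel_measurable (lebesgue_on S)"
  using continuous_imp_measurable_on_sets_lebesgue[OF assms(1,2)] assms(3)
  by (subst measurable_cong[where g = f]) auto

lemma borel_measurable_lebesgue_on_pieces:
  assumes "countable C" "S \<in> sets lebesgue" "S \<subseteq> \<Union> C"
    and sets: "\<And>\<Omega>. \<Omega> \<in> C \<Longrightarrow> \<Omega> \<in> sets lebesgue" "\<And>\<Omega>. \<Omega> \<in> C \<Longrightarrow> \<Omega> \<subseteq> S"
    and meas: "\<And>\<Omega>. \<Omega> \<in> C \<Longrightarrow> f \<in> borel_measurable (lebesgue_on \<Omega>)"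
  shows "f \<in> borel_measurable (lebesgue_on S)"
proof (rule measurable_piecewise_restrict[of C])
  fix \<Omega> assume \<Omega>: "\<Omega> \<in> C"
  thus "\<Omega> \<inter> space (lebesgue_on S) \<in> sets (lebesgue_on S)"
    using assms by (auto simp: sets_restrict_space_iff)
  have "restrict_space (lebesgue_on S) \<Omega> = lebesgue_on \<Omega>"
    using sets[OF \<Omega>] \<open>S \<in> sets lebesgue\<close>
    by (subst restrict_restrict_space) (auto simp: Int_absorb1 sets_restrict_space_iff)
  thus "f \<in> borel_measurable (restrict_space (lebesgue_on S) \<Omega>)" using meas[OF \<Omega>] by simp
qed (use assms in auto)

section \<open>The star-shaped network\<close>

lemma zero_in_ray [simp]: "0 \<in> ray v"
  unfolding ray_def by auto

lemma scaleR_in_ray: "r \<ge> 0 \<Longrightarrow> r *\<^sub>R v \<in> ray v"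
  unfolding ray_def by auto

lemma ray_eq_scaleR_norm: "norm v = 1 \<Longrightarrow> z \<in> ray v \<Longrightarrow> z = norm z *\<^sub>R v"
  unfolding ray_def by auto

lemma closed_ray: "norm v = 1 \<Longrightarrow> closed (ray v)"
proof -
  assume "norm v = 1"
  hence "ray v = {z. z = (z \<bullet> v) *\<^sub>R v \<and> 0 \<le> z \<bullet> v}"
    unfolding ray_def by (auto simp: dot_square_norm power2_eq_square)
  thus "closed (ray v)"
    by (simp only:) (intro closed_Collect_conj closed_Collect_eq closed_Collect_le continuous_intros)
qed

locale star_network =
  fixes e :: "nat \<Rightarrow> 'a::euclidean_space" and N :: nat
  assumes norm_dir: "\<And>i. i \<in> {1..N} \<Longrightarrow> norm (e i) = 1"
    and inj_dir: "inj_on e {1..N}"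
begin

lemma ray_inter_ray:
  assumes "i \<in> {1..N}" "k \<in> {1..N}" "i \<noteq> k" "z \<in> ray (e i)" "z \<in> ray (e k)"
  shows "z = 0"
proof (rule ccontr)
  assume "z \<noteq> 0"
  moreover have "z = norm z *\<^sub>R e i" "z = norm z *\<^sub>R e k"
    using ray_eq_scaleR_norm norm_dir assms by auto
  ultimately have "e i = e k" by (metis scaleR_cancel_left norm_eq_zero)
  with inj_dir assms show False by (auto dest: inj_onD)
qed

lemma edge_index_eq:
  assumes "k \<in> {1..N}" "z \<in> ray (e k)" "z \<noteq> 0"
  shows "edge_index e N z = k"
  unfolding edge_index_def using assms ray_inter_ray by (intro the_equality) auto

lemma netw_cases [consumes 1, case_names vertex edge]:
  assumes "z \<in> netw e N"
  obtains "z = 0"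
    | k where "k \<in> {1..N}" "z \<in> ray (e k)" "z \<noteq> 0" "edge_index e N z = k"
  using assms edge_index_eq unfolding netw_def by blast

lemma norm_diff_le_gdist: "norm (u - w) \<le> gdist e N u w"
  unfolding gdist_def by (auto intro: norm_triangle_ineq4)

lemma gdist_nonneg: "gdist e N u w \<ge> 0"
  using norm_diff_le_gdist[of u w] norm_ge_zero[of "u - w"] by linarith

lemma gdist_triangle: "gdist e N u w \<le> gdist e N u v + gdist e N v w"
proof (cases "\<exists>i\<in>{1..N}. u \<in> ray (e i) \<and> w \<in> ray (e i)")
  case True
  hence "gdist e N u w = norm (u - w)" unfolding gdist_def by auto
  also have "\<dots> \<le> norm (u - v) + norm (v - w)" by (rule norm_diff_triangle_ineq[of u v v w, simplified])
  also have "\<dots> \<le> gdist e N u v + gdist e N v w" using norm_diff_le_gdist by (intro add_mono)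
  finally show ?thesis .
next
  case uw: False
  hence eq: "gdist e N u w = norm u + norm w" unfolding gdist_def by auto
  let ?uv = "\<exists>j\<in>{1..N}. u \<in> ray (e j) \<and> v \<in> ray (e j)"
    and ?vw = "\<exists>j\<in>{1..N}. v \<in> ray (e j) \<and> w \<in> ray (e j)"
  consider ?uv ?vw | "\<not> ?vw" | "\<not> ?uv" by blast
  thus ?thesis
  proof cases
    case 1
    then obtain j1 j2 where j: "j1 \<in> {1..N}" "u \<in> ray (e j1)" "v \<in> ray (e j1)"
      "j2 \<in> {1..N}" "v \<in> ray (e j2)" "w \<in> ray (e j2)" by auto
    with uw have "v = 0" using ray_inter_ray by blast
    hence "gdist e N u v = norm u" "gdist e N v w = norm w" unfolding gdist_def using j by auto
    thus ?thesis using eq by simp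
  next
    case 2
    hence "gdist e N v w = norm v + norm w" unfolding gdist_def by auto
    moreover have "norm u - norm v \<le> gdist e N u v"
      using norm_diff_le_gdist[of u v] norm_triangle_ineq2[of u v] by linarith
    ultimately show ?thesis using eq by simp
  next
    case 3
    hence "gdist e N u v = norm u + norm v" unfolding gdist_def by auto
    moreover have "norm w - norm v \<le> gdist e N v w"
      using norm_diff_le_gdist[of v w] norm_triangle_ineq3[of w v] by (simp add: norm_minus_commute)
    ultimately show ?thesis using eq by simp
  qed
qed

lemma norm_dyn_le: "fst a \<le> N \<Longrightarrow> norm (dyn e z a) \<le> \<bar>snd a\<bar>"
  using norm_dir unfolding dyn_def by (cases "fst a = 0") auto

lemma dyn_scale_control: "dyn e z (fst a, c * snd a) = c *\<^sub>R dyn e w a"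
  unfolding dyn_def by auto

lemma inM_on_edge:
  assumes "k \<in> {1..N}" "z \<in> ray (e k)"
  shows "inM e N z (k, v)"
  using assms ray_inter_ray[OF _ assms(1), of _ z] unfolding inM_def netw_def by fastforce

lemma inM_scale_control: "inM e N z (fst a, r) \<longleftrightarrow> inM e N z a"
  unfolding inM_def by simp

lemma GammaD:
  assumes "(y, \<alpha>) \<in> Gamma e N t1 t2 x"
  shows "\<And>s. s \<in> {t1..t2} \<Longrightarrow> y s \<in> netw e N"
    "(\<lambda>s. fst (\<alpha> s)) \<in> lebesgue_on {t1..t2} \<rightarrow>\<^sub>M count_space UNIV"
    "(\<lambda>s. snd (\<alpha> s)) \<in> borel_measurable (lebesgue_on {t1..t2})"
    "AE s in lebesgue. s \<in> {t1..t2} \<longrightarrow> inM e N (y s) (\<alpha> s)"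
    "set_integrable lebesgue {t1..t2} (\<lambda>s. (snd (\<alpha> s))\<^sup>2)"
    "\<And>s. s \<in> {t1..t2} \<Longrightarrow> set_integrable lebesgue {t1..s} (\<lambda>\<tau>. dyn e (y \<tau>) (\<alpha> \<tau>))"
    "\<And>s. s \<in> {t1..t2} \<Longrightarrow> y s = x + (LINT \<tau>:{t1..s}|lebesgue. dyn e (y \<tau>) (\<alpha> \<tau>))"
  using assms unfolding Gamma_def by auto

lemma GammaI:
  assumes "\<And>s. s \<in> {t1..t2} \<Longrightarrow> y s \<in> netw e N"
    "(\<lambda>s. fst (\<alpha> s)) \<in> lebesgue_on {t1..t2} \<rightarrow>\<^sub>M count_space UNIV"
    "(\<lambda>s. snd (\<alpha> s)) \<in> borel_measurable (lebesgue_on {t1..t2})"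
    "AE s in lebesgue. s \<in> {t1..t2} \<longrightarrow> inM e N (y s) (\<alpha> s)"
    "set_integrable lebesgue {t1..t2} (\<lambda>s. (snd (\<alpha> s))\<^sup>2)"
    "\<And>s. s \<in> {t1..t2} \<Longrightarrow> set_integrable lebesgue {t1..s} (\<lambda>\<tau>. dyn e (y \<tau>) (\<alpha> \<tau>))"
    "\<And>s. s \<in> {t1..t2} \<Longrightarrow> y s = x + (LINT \<tau>:{t1..s}|lebesgue. dyn e (y \<tau>) (\<alpha> \<tau>))"
  shows "(y, \<alpha>) \<in> Gamma e N t1 t2 x"
  using assms unfolding Gamma_def by auto

lemma Gamma_eq_integral:
  assumes G: "(y, \<alpha>) \<in> Gamma e N t1 t2 x" and s: "s \<in> {t1..t2}"
  shows "y s = x + integral {t1..s} (\<lambda>\<tau>. dyn e (y \<tau>) (\<alpha> \<tau>))"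
  using GammaD(7)[OF G s] set_lebesgue_integral_eq_integral(2)[OF GammaD(6)[OF G s]] by simp

lemma Gamma_start:
  assumes "(y, \<alpha>) \<in> Gamma e N t1 t2 x" "t1 \<le> t2"
  shows "y t1 = x"
  using Gamma_eq_integral[OF assms(1), of t1] assms(2) by simp

lemma Gamma_continuous_on:
  assumes G: "(y, \<alpha>) \<in> Gamma e N t1 t2 x"
  shows "continuous_on {t1..t2} y"
proof (cases "t1 \<le> t2")
  case True
  let ?f = "\<lambda>\<tau>. dyn e (y \<tau>) (\<alpha> \<tau>)"
  have "?f integrable_on {t1..t2}"
    using GammaD(6)[OF G, of t2] True set_lebesgue_integral_eq_integral(1) by auto
  hence "continuous_on {t1..t2} (\<lambda>s. x + integral {t1..s} ?f)"
    by (intro continuous_intros indefinite_integral_continuous_1)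
  thus ?thesis by (rule continuous_on_eq) (use Gamma_eq_integral[OF G] in auto)
qed simp

lemma Gamma_abs_control_integrable:
  assumes G: "(y, \<alpha>) \<in> Gamma e N t1 t2 x" and "t1 \<le> u" "w \<le> t2"
  shows "set_integrable lebesgue {u..w} (\<lambda>s. \<bar>snd (\<alpha> s)\<bar>)"
  using set_integrable_abs_of_square[OF GammaD(3,5)[OF G]]
  by (rule set_integrable_subset) (use assms in auto)

lemma Gamma_norm_diff_le:
  assumes G: "(y, \<alpha>) \<in> Gamma e N t1 t2 x" and "t1 \<le> u" "u \<le> w" "w \<le> t2"
  shows "norm (y w - y u) \<le> (LINT s:{u..w}|lebesgue. \<bar>snd (\<alpha> s)\<bar>)"
proof -
  let ?f = "\<lambda>\<tau>. dyn e (y \<tau>) (\<alpha> \<tau>)"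
  have iw: "set_integrable lebesgue {t1..w} ?f" using GammaD(6)[OF G, of w] assms by auto
  have iuw: "set_integrable lebesgue {u..w} ?f" by (rule set_integrable_subset[OF iw]) (use assms in auto)
  have "integral {t1..u} ?f + integral {u..w} ?f = integral {t1..w} ?f"
    by (rule Henstock_Kurzweil_Integration.integral_combine[OF assms(2,3)])
      (rule set_lebesgue_integral_eq_integral(1)[OF iw])
  hence "y w - y u = integral {u..w} ?f"
    using Gamma_eq_integral[OF G, of u] Gamma_eq_integral[OF G, of w] assms by (simp add: algebra_simps)
  also have "\<dots> = (LINT s:{u..w}|lebesgue. ?f s)" using set_lebesgue_integral_eq_integral(2)[OF iuw] by simp
  finally have "norm (y w - y u) = norm (LINT s:{u..w}|lebesgue. ?f s)" by simp
  also have "\<dots> \<le> (LINT s:{u..w}|lebesgue. norm (?f s))" by (rule set_integral_norm_bound[OF iuw])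
  also have "\<dots> \<le> (LINT s:{u..w}|lebesgue. \<bar>snd (\<alpha> s)\<bar>)"
  proof (rule set_integral_mono_AE)
    show "set_integrable lebesgue {u..w} (\<lambda>s. norm (?f s))" using iuw by (rule set_integrable_norm)
    show "set_integrable lebesgue {u..w} (\<lambda>s. \<bar>snd (\<alpha> s)\<bar>)"
      using Gamma_abs_control_integrable[OF G] assms by auto
    show "AE s\<in>{u..w} in lebesgue. norm (?f s) \<le> \<bar>snd (\<alpha> s)\<bar>"
      using GammaD(4)[OF G] by eventually_elim (use assms in \<open>auto simp: inM_def intro!: norm_dyn_le\<close>)
  qed
  finally show ?thesis .
qed

(* The edges are closed and meet only at the vertex, so a connected piece of trajectory that
   avoids the vertex stays on one edge. *)
lemma Gamma_hits_vertex:
  assumes G: "(y, \<alpha>) \<in> Gamma e N t1 t2 x" and "t1 \<le> u" "u \<le> w" "w \<le> t2"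
    and apart: "\<not> (\<exists>i\<in>{1..N}. y u \<in> ray (e i) \<and> y w \<in> ray (e i))"
  shows "\<exists>c\<in>{u..w}. y c = 0"
proof (rule ccontr)
  assume nz: "\<not> (\<exists>c\<in>{u..w}. y c = 0)"
  have net: "y s \<in> netw e N" if "s \<in> {u..w}" for s using GammaD(1)[OF G] that assms by auto
  obtain i where i: "i \<in> {1..N}" "y u \<in> ray (e i)" using net[of u] assms unfolding netw_def by auto
  obtain k where k: "k \<in> {1..N}" "y w \<in> ray (e k)" using net[of w] assms unfolding netw_def by auto
  let ?S = "y ` {u..w}" and ?A = "ray (e i)" and ?B = "\<Union>j\<in>{1..N}-{i}. ray (e j)"
  have "continuous_on {u..w} y"
    using Gamma_continuous_on[OF G] assms continuous_on_subset by fastforce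
  hence "connected ?S" by (intro connected_continuous_image) auto
  moreover have "closed ?A" "closed ?B" using i by (auto intro!: closed_UN closed_ray norm_dir)
  moreover have "?S \<subseteq> ?A \<union> ?B" using net unfolding netw_def by blast
  moreover have "?A \<inter> ?B \<inter> ?S = {}" using ray_inter_ray i nz by blast
  moreover have "?A \<inter> ?S \<noteq> {}" using i assms by auto
  moreover have "y w \<in> ?B \<inter> ?S" using k i apart assms by auto
  ultimately show False unfolding connected_closed by blast
qed

lemma Gamma_gdist_le:
  assumes G: "(y, \<alpha>) \<in> Gamma e N t1 t2 x" and "t1 \<le> u" "u \<le> w" "w \<le> t2"
  shows "gdist e N (y u) (y w) \<le> (LINT s:{u..w}|lebesgue. \<bar>snd (\<alpha> s)\<bar>)"
proof (cases "\<exists>i\<in>{1..N}. y u \<in> ray (e i) \<and> y w \<in> ray (e i)")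
  case True
  thus ?thesis using Gamma_norm_diff_le[OF assms] unfolding gdist_def by (auto simp: norm_minus_commute)
next
  case False
  obtain c where c: "c \<in> {u..w}" "y c = 0" using Gamma_hits_vertex[OF assms False] by auto
  have "norm (y u) \<le> (LINT s:{u..c}|lebesgue. \<bar>snd (\<alpha> s)\<bar>)"
    using Gamma_norm_diff_le[OF G, of u c] c assms by (simp add: norm_minus_commute)
  moreover have "norm (y w) \<le> (LINT s:{c..w}|lebesgue. \<bar>snd (\<alpha> s)\<bar>)"
    using Gamma_norm_diff_le[OF G, of c w] c assms by simp
  moreover have "(LINT s:{u..w}|lebesgue. \<bar>snd (\<alpha> s)\<bar>)
      = (LINT s:{u..c}|lebesgue. \<bar>snd (\<alpha> s)\<bar>) + (LINT s:{c..w}|lebesgue. \<bar>snd (\<alpha> s)\<bar>)"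
    using set_integral_Icc_join(2)[where a = u and b = c and c = w, OF
        Gamma_abs_control_integrable[OF G] Gamma_abs_control_integrable[OF G]] c assms
    by simp
  ultimately show ?thesis using False unfolding gdist_def by auto
qed

lemma Gamma_gdist_le_sqrt:
  assumes G: "(y, \<alpha>) \<in> Gamma e N t1 t2 x" and "t1 \<le> u" "u \<le> w" "w \<le> t2"
  shows "gdist e N (y u) (y w) \<le> sqrt ((LINT s:{t1..t2}|lebesgue. (snd (\<alpha> s))\<^sup>2) * (w - u))"
proof -
  have sq: "set_integrable lebesgue {u..w} (\<lambda>s. (snd (\<alpha> s))\<^sup>2)"
    by (rule set_integrable_subset[OF GammaD(5)[OF G]]) (use assms in auto)
  have "integral {u..w} (\<lambda>s. (snd (\<alpha> s))\<^sup>2) \<le> integral {t1..t2} (\<lambda>s. (snd (\<alpha> s))\<^sup>2)"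
    using assms set_lebesgue_integral_eq_integral(1)[OF sq]
      set_lebesgue_integral_eq_integral(1)[OF GammaD(5)[OF G]]
    by (intro integral_subset_le) auto
  hence "(LINT s:{u..w}|lebesgue. (snd (\<alpha> s))\<^sup>2) \<le> (LINT s:{t1..t2}|lebesgue. (snd (\<alpha> s))\<^sup>2)"
    using set_lebesgue_integral_eq_integral(2)[OF sq]
      set_lebesgue_integral_eq_integral(2)[OF GammaD(5)[OF G]] by simp
  hence "sqrt ((LINT s:{u..w}|lebesgue. (snd (\<alpha> s))\<^sup>2) * (w - u))
      \<le> sqrt ((LINT s:{t1..t2}|lebesgue. (snd (\<alpha> s))\<^sup>2) * (w - u))"
    using assms by (intro real_sqrt_le_mono mult_right_mono) auto
  moreover have "(LINT s:{u..w}|lebesgue. \<bar>snd (\<alpha> s)\<bar>)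
      \<le> sqrt ((LINT s:{u..w}|lebesgue. (snd (\<alpha> s))\<^sup>2) * (w - u))"
    using set_integral_abs_le_sqrt[OF Gamma_abs_control_integrable[OF G] sq] assms by simp
  ultimately show ?thesis using Gamma_gdist_le[OF assms] by linarith
qed

lemma Gamma_segment:
  assumes k: "k \<in> {1..N}" and "r0 \<ge> 0" "t0 \<le> t1" "r0 + v * (t1 - t0) \<ge> 0"
  shows "(\<lambda>s. (r0 + v * (s - t0)) *\<^sub>R e k, \<lambda>_. (k, v)) \<in> Gamma e N t0 t1 (r0 *\<^sub>R e k)"
proof -
  have on_edge: "(r0 + v * (s - t0)) *\<^sub>R e k \<in> ray (e k)" if s: "s \<in> {t0..t1}" for s
  proof (rule scaleR_in_ray)
    show "r0 + v * (s - t0) \<ge> 0"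
    proof (cases "v \<ge> 0")
      case False
      hence "v * (s - t0) \<ge> v * (t1 - t0)" using s by (intro mult_left_mono_neg) auto
      thus ?thesis using assms by linarith
    qed (use s assms in auto)
  qed
  have dyn: "dyn e z (k, v) = v *\<^sub>R e k" for z using k unfolding dyn_def by auto
  show ?thesis
  proof (rule GammaI)
    show "AE s in lebesgue. s \<in> {t0..t1} \<longrightarrow> inM e N ((r0 + v * (s - t0)) *\<^sub>R e k) (k, v)"
      using on_edge k by (intro AE_I2 impI inM_on_edge)
    fix s assume s: "s \<in> {t0..t1}"
    show "(r0 + v * (s - t0)) *\<^sub>R e k \<in> netw e N" using on_edge[OF s] k unfolding netw_def by auto
    show "set_integrable lebesgue {t0..s} (\<lambda>\<tau>. dyn e ((r0 + v * (\<tau> - t0)) *\<^sub>R e k) (k, v))"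
      unfolding dyn by (rule absolutely_integrable_on_const) auto
    show "(r0 + v * (s - t0)) *\<^sub>R e k
        = r0 *\<^sub>R e k + (LINT \<tau>:{t0..s}|lebesgue. dyn e ((r0 + v * (\<tau> - t0)) *\<^sub>R e k) (k, v))"
      unfolding dyn using s by (simp add: set_integral_const algebra_simps)
  qed (auto simp: absolutely_integrable_on_const)
qed

lemma Gamma_join:
  assumes G1: "(y1, \<alpha>1) \<in> Gamma e N t0 t1 x" and G2: "(y2, \<alpha>2) \<in> Gamma e N t1 t2 (y1 t1)"
    and t: "t0 \<le> t1" "t1 \<le> t2"
  shows "(\<lambda>s. if s \<le> t1 then y1 s else y2 s, \<lambda>s. if s \<le> t1 then \<alpha>1 s else \<alpha>2 s)
           \<in> Gamma e N t0 t2 x"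
proof (rule GammaI)
  let ?y = "\<lambda>s. if s \<le> t1 then y1 s else y2 s" and ?\<alpha> = "\<lambda>s. if s \<le> t1 then \<alpha>1 s else \<alpha>2 s"
  let ?F1 = "\<lambda>\<tau>. dyn e (y1 \<tau>) (\<alpha>1 \<tau>)" and ?F2 = "\<lambda>\<tau>. dyn e (y2 \<tau>) (\<alpha>2 \<tau>)"
  show "?y s \<in> netw e N" if "s \<in> {t0..t2}" for s using GammaD(1)[OF G1] GammaD(1)[OF G2] that by auto
  show "(\<lambda>s. fst (?\<alpha> s)) \<in> lebesgue_on {t0..t2} \<rightarrow>\<^sub>M count_space UNIV"
    using measurable_lebesgue_on_Icc_join[OF GammaD(2)[OF G1] GammaD(2)[OF G2]] by (simp add: if_distrib)
  show "(\<lambda>s. snd (?\<alpha> s)) \<in> borel_measurable (lebesgue_on {t0..t2})"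
    using measurable_lebesgue_on_Icc_join[OF GammaD(3)[OF G1] GammaD(3)[OF G2]] by (simp add: if_distrib)
  show "AE s in lebesgue. s \<in> {t0..t2} \<longrightarrow> inM e N (?y s) (?\<alpha> s)"
    using GammaD(4)[OF G1] GammaD(4)[OF G2] by eventually_elim auto
  show "set_integrable lebesgue {t0..t2} (\<lambda>s. (snd (?\<alpha> s))\<^sup>2)"
    using set_integral_Icc_join(1)[OF GammaD(5)[OF G1] GammaD(5)[OF G2] t]
    by (rule set_integrable_cong[THEN iffD1, rotated 3]) auto
  fix s assume s: "s \<in> {t0..t2}"
  have F: "dyn e (?y \<tau>) (?\<alpha> \<tau>) = (if \<tau> \<le> t1 then ?F1 \<tau> else ?F2 \<tau>)" for \<tau> by simp
  have "set_integrable lebesgue {t0..s} (\<lambda>\<tau>. dyn e (?y \<tau>) (?\<alpha> \<tau>))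
    \<and> ?y s = x + (LINT \<tau>:{t0..s}|lebesgue. dyn e (?y \<tau>) (?\<alpha> \<tau>))"
  proof (cases "s \<le> t1")
    case True
    hence s1: "s \<in> {t0..t1}" using s by auto
    have "set_integrable lebesgue {t0..s} ?F1" "?y s = x + (LINT \<tau>:{t0..s}|lebesgue. ?F1 \<tau>)"
      using GammaD(6,7)[OF G1 s1] True by auto
    moreover have "set_integrable lebesgue {t0..s} (\<lambda>\<tau>. dyn e (?y \<tau>) (?\<alpha> \<tau>))
        \<longleftrightarrow> set_integrable lebesgue {t0..s} ?F1"
      using True by (intro set_integrable_cong) auto
    moreover have "(LINT \<tau>:{t0..s}|lebesgue. dyn e (?y \<tau>) (?\<alpha> \<tau>)) = (LINT \<tau>:{t0..s}|lebesgue. ?F1 \<tau>)"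
      using True by (intro set_lebesgue_integral_cong) auto
    ultimately show ?thesis by simp
  next
    case False
    hence s2: "s \<in> {t1..t2}" using s by auto
    have t1: "t1 \<in> {t0..t1}" using t by auto
    show ?thesis
      unfolding F using set_integral_Icc_join[OF GammaD(6)[OF G1 t1] GammaD(6)[OF G2 s2]]
        GammaD(7)[OF G1 t1] GammaD(7)[OF G2 s2] t s2 False by simp
  qed
  thus "set_integrable lebesgue {t0..s} (\<lambda>\<tau>. dyn e (?y \<tau>) (?\<alpha> \<tau>))"
    "?y s = x + (LINT \<tau>:{t0..s}|lebesgue. dyn e (?y \<tau>) (?\<alpha> \<tau>))" by auto
qed

lemma Gamma_rescale:
  assumes G: "(y, \<alpha>) \<in> Gamma e N 0 U x" and c: "c > 0"
  shows "(\<lambda>s. y (c * (s - d)), \<lambda>s. (fst (\<alpha> (c * (s - d))), c * snd (\<alpha> (c * (s - d)))))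
           \<in> Gamma e N d (d + U / c) x"
proof (rule GammaI)
  let ?\<alpha> = "\<lambda>s. (fst (\<alpha> (c * (s - d))), c * snd (\<alpha> (c * (s - d))))"
  have mem: "s \<in> {d..d + V / c} \<longleftrightarrow> c * (s - d) \<in> {0..V}" for s V using c by (auto simp: field_simps)
  show "y (c * (s - d)) \<in> netw e N" if "s \<in> {d..d + U / c}" for s
    using GammaD(1)[OF G] mem[of s U] that by auto
  show "(\<lambda>s. fst (?\<alpha> s)) \<in> lebesgue_on {d..d + U / c} \<rightarrow>\<^sub>M count_space UNIV"
    using measurable_lebesgue_on_real_affine[OF c GammaD(2)[OF G]] by simp
  show "(\<lambda>s. snd (?\<alpha> s)) \<in> borel_measurable (lebesgue_on {d..d + U / c})"
    using measurable_lebesgue_on_real_affine[OF c GammaD(3)[OF G]] by simp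
  have "AE s in lebesgue. (- c * d + c * s) \<in> {0..U}
          \<longrightarrow> inM e N (y (- c * d + c * s)) (\<alpha> (- c * d + c * s))"
    using c GammaD(4)[OF G] by (intro AE_lebesgue_real_affine) auto
  thus "AE s in lebesgue. s \<in> {d..d + U / c} \<longrightarrow> inM e N (y (c * (s - d))) (?\<alpha> s)"
    by eventually_elim (use mem[of _ U] in \<open>auto simp: algebra_simps inM_scale_control\<close>)
  have "set_integrable lebesgue {d..d + U / c} (\<lambda>s. c\<^sup>2 * (snd (\<alpha> (c * (s - d))))\<^sup>2)"
    using set_integral_real_affine(1)[OF c, of d U "\<lambda>\<tau>. (snd (\<alpha> \<tau>))\<^sup>2"] GammaD(5)[OF G]
    by (intro set_integrable_mult_right) simp
  thus "set_integrable lebesgue {d..d + U / c} (\<lambda>s. (snd (?\<alpha> s))\<^sup>2)" by (simp add: power_mult_distrib)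
  fix s assume s: "s \<in> {d..d + U / c}"
  define V where "V = c * (s - d)"
  have V: "V \<in> {0..U}" and sV: "{d..s} = {d..d + V / c}" using mem[of s U] s c by (auto simp: V_def)
  let ?F = "\<lambda>\<tau>. dyn e (y \<tau>) (\<alpha> \<tau>)"
  have F: "dyn e (y (c * (\<tau> - d))) (?\<alpha> \<tau>) = c *\<^sub>R ?F (c * (\<tau> - d))" for \<tau>
    by (rule dyn_scale_control)
  show "set_integrable lebesgue {d..s} (\<lambda>\<tau>. dyn e (y (c * (\<tau> - d))) (?\<alpha> \<tau>))"
    unfolding F sV using set_integral_real_affine(1)[OF c, of d V ?F] GammaD(6)[OF G V]
    by (intro set_integrable_scaleR_right) simp
  show "y (c * (s - d)) = x + (LINT \<tau>:{d..s}|lebesgue. dyn e (y (c * (\<tau> - d))) (?\<alpha> \<tau>))"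
    unfolding F sV using set_integral_real_affine(2)[OF c, of d V ?F] GammaD(7)[OF G V] c
    by (simp add: V_def)
qed

lemma geodesic_exists:
  assumes z: "z \<in> netw e N" and x: "x \<in> netw e N"
  shows "\<exists>p \<beta>. (p, \<beta>) \<in> Gamma e N 0 (gdist e N z x) z \<and> p (gdist e N z x) = x
           \<and> (\<forall>\<tau>. \<bar>snd (\<beta> \<tau>)\<bar> \<le> 1)"
proof (cases "\<exists>k\<in>{1..N}. z \<in> ray (e k) \<and> x \<in> ray (e k)")
  case True
  then obtain k where k: "k \<in> {1..N}" "z \<in> ray (e k)" "x \<in> ray (e k)" by auto
  define a b where "a = norm z" and "b = norm x"
  have za: "z = a *\<^sub>R e k" and xb: "x = b *\<^sub>R e k"
    using ray_eq_scaleR_norm norm_dir k unfolding a_def b_def by auto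
  have "gdist e N z x = norm ((a - b) *\<^sub>R e k)"
    using True unfolding gdist_def za xb by (simp add: scaleR_diff_left)
  hence d: "gdist e N z x = \<bar>a - b\<bar>" using norm_dir k by simp
  define v where "v = sgn (b - a)"
  have v: "v * \<bar>a - b\<bar> = b - a" "\<bar>v\<bar> \<le> 1" unfolding v_def by (auto simp: sgn_if)
  have "(\<lambda>s. (a + v * (s - 0)) *\<^sub>R e k, \<lambda>_. (k, v)) \<in> Gamma e N 0 \<bar>a - b\<bar> (a *\<^sub>R e k)"
    using v by (intro Gamma_segment k) (auto simp: a_def b_def)
  hence "(\<lambda>s. (a + v * (s - 0)) *\<^sub>R e k, \<lambda>_. (k, v)) \<in> Gamma e N 0 (gdist e N z x) z"
    unfolding d by (subst za)
  moreover have "(a + v * (gdist e N z x - 0)) *\<^sub>R e k = x" unfolding d using v xb by simp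
  ultimately show ?thesis using v by fastforce
next
  case False
  obtain i j where i: "i \<in> {1..N}" "z \<in> ray (e i)" and j: "j \<in> {1..N}" "x \<in> ray (e j)"
    using z x unfolding netw_def by auto
  define a b where "a = norm z" and "b = norm x"
  have za: "z = a *\<^sub>R e i" and xb: "x = b *\<^sub>R e j"
    using ray_eq_scaleR_norm norm_dir i j unfolding a_def b_def by auto
  have d: "gdist e N z x = a + b" using False unfolding gdist_def a_def b_def by auto
  have "x \<noteq> 0" using False i by auto
  hence "b > 0" unfolding b_def by simp
  define p1 p2 where "p1 = (\<lambda>s. (a + (-1) * (s - 0)) *\<^sub>R e i)" and "p2 = (\<lambda>s. (0 + 1 * (s - a)) *\<^sub>R e j)"
  have "(p1, \<lambda>_. (i, -1)) \<in> Gamma e N 0 a z"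
    unfolding p1_def za by (rule Gamma_segment[OF i(1)]) (auto simp: a_def)
  moreover have "(p2, \<lambda>_. (j, 1)) \<in> Gamma e N a (a + b) (p1 a)"
    using Gamma_segment[OF j(1), of 0 a "a + b" 1] \<open>b > 0\<close> unfolding p1_def p2_def by simp
  ultimately have "(\<lambda>s. if s \<le> a then p1 s else p2 s, \<lambda>s. if s \<le> a then (i, -1) else (j, 1))
      \<in> Gamma e N 0 (gdist e N z x) z"
    unfolding d using \<open>b > 0\<close> by (intro Gamma_join) (auto simp: a_def)
  moreover have "(if a + b \<le> a then p1 (a + b) else p2 (a + b)) = x"
    using \<open>b > 0\<close> unfolding p2_def xb by simp
  ultimately show ?thesis unfolding d by (intro exI[of _ "\<lambda>s. if s \<le> a then p1 s else p2 s"]) auto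
qed

end

section \<open>The running cost\<close>

locale star_control_problem = star_network e N for e :: "nat \<Rightarrow> 'a::euclidean_space" and N +
  fixes l :: "nat \<Rightarrow> 'a \<Rightarrow> real \<Rightarrow> real" and lstar :: "real \<Rightarrow> real" and T :: real
  assumes N_pos: "N \<ge> 1" and T_pos: "T > 0"
    and l_cont: "\<And>i. i \<in> {1..N} \<Longrightarrow> continuous_on (ray (e i) \<times> {0..T}) (\<lambda>(z, t). l i z t)"
    and l_bdd: "\<And>i. i \<in> {1..N} \<Longrightarrow> bounded ((\<lambda>(z, t). l i z t) ` (ray (e i) \<times> {0..T}))"
    and lstar_cont: "continuous_on {0..T} lstar"
    and lstar_bdd: "bounded (lstar ` {0..T})"
begin

abbreviation LL :: "'a \<Rightarrow> real \<Rightarrow> real" where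
  "LL \<equiv> Lcost e N l lstar"

lemma Lcost_edge: "k \<in> {1..N} \<Longrightarrow> z \<in> ray (e k) \<Longrightarrow> z \<noteq> 0 \<Longrightarrow> LL z t = l k z t"
  unfolding Lcost_def using edge_index_eq by simp

lemma l_in_range:
  "i \<in> {1..N} \<Longrightarrow> z \<in> ray (e i) \<Longrightarrow> t \<in> {0..T} \<Longrightarrow>
    l i z t \<in> (\<Union>i\<in>{1..N}. (\<lambda>(z, t). l i z t) ` (ray (e i) \<times> {0..T}))"
  by (intro UN_I image_eqI[of _ _ "(z, t)"]) auto

lemma Lcost_in_range:
  assumes z: "z \<in> netw e N" and t: "t \<in> {0..T}"
  shows "LL z t \<in> lstar ` {0..T} \<union> (\<Union>i\<in>{1..N}. (\<lambda>(z, t). l i z t) ` (ray (e i) \<times> {0..T}))"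
  using z
proof (cases rule: netw_cases)
  case vertex
  obtain i where i: "i \<in> {1..N}" "Min ((\<lambda>i. l i 0 t) ` {1..N}) = l i 0 t"
    using Min_in[of "(\<lambda>i. l i 0 t) ` {1..N}"] N_pos by fastforce
  have "LL z t = lstar t \<or> LL z t = l i 0 t" unfolding vertex Lcost_def i(2) by (simp add: min_def)
  thus ?thesis
  proof
    assume "LL z t = lstar t"
    thus ?thesis using t by (simp only:) (intro UnI1 imageI)
  next
    assume "LL z t = l i 0 t"
    thus ?thesis by (simp only:) (intro UnI2 l_in_range i(1) zero_in_ray t)
  qed
next
  case (edge k)
  thus ?thesis unfolding Lcost_edge[OF edge(1-3)] by (intro UnI2 l_in_range t)
qed

lemma Lcost_bound:
  obtains B where "\<And>z t. z \<in> netw e N \<Longrightarrow> t \<in> {0..T} \<Longrightarrow> \<bar>LL z t\<bar> \<le> B"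
proof -
  let ?R = "lstar ` {0..T} \<union> (\<Union>i\<in>{1..N}. (\<lambda>(z, t). l i z t) ` (ray (e i) \<times> {0..T}))"
  have "bounded ?R" using lstar_bdd l_bdd by (simp add: bounded_UN)
  then obtain B where B: "\<forall>r\<in>?R. \<bar>r\<bar> \<le> B" unfolding bounded_real by (elim exE)
  show ?thesis
  proof (rule that)
    fix z t assume "z \<in> netw e N" "t \<in> {0..T}"
    thus "\<bar>LL z t\<bar> \<le> B" using B Lcost_in_range by simp
  qed
qed

lemma l_continuous_on_time:
  assumes "i \<in> {1..N}" "z \<in> ray (e i)"
  shows "continuous_on {0..T} (l i z)"
proof -
  have "continuous_on {0..T} (\<lambda>t. (\<lambda>(z, t). l i z t) (z, t))"
    by (rule continuous_on_compose2[OF l_cont[OF assms(1)]]) (use assms in \<open>auto intro!: continuous_on_Pair continuous_on_const continuous_on_id\<close>)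
  thus ?thesis by simp
qed

lemma Lcost_vertex_continuous_on: "continuous_on {0..T} (LL 0)"
proof -
  have "continuous_on {0..T} (\<lambda>t. min (lstar t) (Min ((\<lambda>i. l i 0 t) ` {1..N})))"
    using N_pos l_continuous_on_time
    by (intro continuous_on_min lstar_cont continuous_on_Min_finite) auto
  thus ?thesis unfolding Lcost_def by simp
qed

lemma Lcost_continuous_on:
  assumes "z \<in> netw e N" shows "continuous_on {0..T} (LL z)"
  using assms
proof (cases rule: netw_cases)
  case (edge k)
  hence "LL z = l k z" using Lcost_edge by auto
  thus ?thesis using l_continuous_on_time edge by simp
qed (use Lcost_vertex_continuous_on in simp)


lemma Lcost_path_measurable:
  fixes \<phi> :: "real \<Rightarrow> 'a" and \<psi> :: "real \<Rightarrow> real"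
  assumes \<phi>: "continuous_on {a..b} \<phi>" "\<And>\<tau>. \<tau> \<in> {a..b} \<Longrightarrow> \<phi> \<tau> \<in> netw e N"
    and \<psi>: "continuous_on {a..b} \<psi>" "\<And>\<tau>. \<tau> \<in> {a..b} \<Longrightarrow> \<psi> \<tau> \<in> {0..T}"
  shows "(\<lambda>\<tau>. LL (\<phi> \<tau>) (\<psi> \<tau>)) \<in> borel_measurable (lebesgue_on {a..b})"
proof -
  define Z where "Z = {a..b} \<inter> \<phi> -` {0}"
  define A where "A i = {a..b} \<inter> \<phi> -` ray (e i) - Z" for i
  have "closed Z" unfolding Z_def by (rule continuous_closed_preimage[OF \<phi>(1)]) auto
  hence Z: "Z \<in> sets lebesgue" by (simp add: borel_closed sets_completionI_sets)
  have "closed ({a..b} \<inter> \<phi> -` ray (e i))" if "i \<in> {1..N}" for i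
    by (rule continuous_closed_preimage[OF \<phi>(1) closed_atLeastAtMost closed_ray[OF norm_dir[OF that]]])
  hence A: "A i \<in> sets lebesgue" if "i \<in> {1..N}" for i
    using Z that unfolding A_def by (auto simp: borel_closed sets_completionI_sets)
  (* While the path is at the vertex, and while it is on the i-th edge away from the vertex,
     the cost is a continuous function of the time. *)
  show ?thesis
  proof (rule borel_measurable_lebesgue_on_pieces[of "insert Z (A ` {1..N})"])
    show "{a..b} \<subseteq> \<Union> (insert Z (A ` {1..N}))"
      using \<phi>(2) unfolding netw_def Z_def A_def by auto
    fix \<Omega> assume \<Omega>: "\<Omega> \<in> insert Z (A ` {1..N})"
    thus "\<Omega> \<in> sets lebesgue" "\<Omega> \<subseteq> {a..b}" using Z A unfolding Z_def A_def by auto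
    from \<Omega> show "(\<lambda>\<tau>. LL (\<phi> \<tau>) (\<psi> \<tau>)) \<in> borel_measurable (lebesgue_on \<Omega>)"
    proof (elim insertE imageE)
      assume "\<Omega> = Z"
      moreover have "(\<lambda>\<tau>. LL (\<phi> \<tau>) (\<psi> \<tau>)) \<in> borel_measurable (lebesgue_on Z)"
      proof (rule borel_measurable_lebesgue_on_eq_continuous[OF _ Z])
        show "continuous_on Z (\<lambda>\<tau>. LL 0 (\<psi> \<tau>))"
          by (rule continuous_on_compose2[OF Lcost_vertex_continuous_on continuous_on_subset[OF \<psi>(1)]])
            (use \<psi>(2) in \<open>auto simp: Z_def\<close>)
      qed (simp add: Z_def)
      ultimately show ?thesis by simp
    next
      fix i assume i: "i \<in> {1..N}" and "\<Omega> = A i"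
      moreover have "(\<lambda>\<tau>. LL (\<phi> \<tau>) (\<psi> \<tau>)) \<in> borel_measurable (lebesgue_on (A i))"
      proof (rule borel_measurable_lebesgue_on_eq_continuous[OF _ A[OF i]])
        show "continuous_on (A i) (\<lambda>\<tau>. (\<lambda>(z, t). l i z t) (\<phi> \<tau>, \<psi> \<tau>))"
          by (rule continuous_on_compose2[OF l_cont[OF i]])
            (use \<phi> \<psi> in \<open>auto simp: A_def intro!: continuous_on_Pair intro: continuous_on_subset\<close>)
        fix \<tau> assume "\<tau> \<in> A i"
        thus "LL (\<phi> \<tau>) (\<psi> \<tau>) = (\<lambda>(z, t). l i z t) (\<phi> \<tau>, \<psi> \<tau>)"
          using Lcost_edge[OF i] by (simp add: A_def Z_def)
      qed
      ultimately show ?thesis by simp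
    qed
  qed auto
qed

lemma Lcost_path_integrable:
  fixes \<phi> :: "real \<Rightarrow> 'a" and \<psi> :: "real \<Rightarrow> real"
  assumes \<phi>: "continuous_on {a..b} \<phi>" "\<And>\<tau>. \<tau> \<in> {a..b} \<Longrightarrow> \<phi> \<tau> \<in> netw e N"
    and \<psi>: "continuous_on {a..b} \<psi>" "\<And>\<tau>. \<tau> \<in> {a..b} \<Longrightarrow> \<psi> \<tau> \<in> {0..T}"
  shows "set_integrable lebesgue {a..b} (\<lambda>\<tau>. LL (\<phi> \<tau>) (\<psi> \<tau>))"
proof -
  obtain B where B: "\<And>z t. z \<in> netw e N \<Longrightarrow> t \<in> {0..T} \<Longrightarrow> \<bar>LL z t\<bar> \<le> B"
    using Lcost_bound by blast
  show ?thesis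
    by (rule measurable_bounded_by_integrable_imp_absolutely_integrable[where g = "\<lambda>_. B"])
      (use Lcost_path_measurable[OF assms] B \<phi>(2) \<psi>(2) in auto)
qed

lemma Jcost_eq:
  assumes G: "(y, \<alpha>) \<in> Gamma e N 0 T z"
  shows "Jcost e N l lstar g gstar T 0 (y, \<alpha>)
           = (LINT \<tau>:{0..T}|lebesgue. LL (y \<tau>) \<tau>) + 1/2 * (LINT \<tau>:{0..T}|lebesgue. (snd (\<alpha> \<tau>))\<^sup>2)
             + gcost e N g gstar (y T)"
proof -
  have "set_integrable lebesgue {0..T} (\<lambda>\<tau>. LL (y \<tau>) \<tau>)"
    using Gamma_continuous_on[OF G] GammaD(1)[OF G] by (intro Lcost_path_integrable continuous_intros) auto
  moreover have "set_integrable lebesgue {0..T} (\<lambda>\<tau>. 1/2 * (snd (\<alpha> \<tau>))\<^sup>2)"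
    using GammaD(5)[OF G] by (rule set_integrable_mult_right)
  ultimately show ?thesis unfolding Jcost_def by (simp add: set_integral_add)
qed

end

section \<open>Approximating trajectories\<close>

lemma L2norm_square: "(L2norm \<alpha> t1 t2)\<^sup>2 = (LINT s:{t1..t2}|lebesgue. (snd (\<alpha> s))\<^sup>2)"
  unfolding L2norm_def set_lebesgue_integral_def
  by (simp add: integral_nonneg_AE indicator_def)

locale reference_trajectory = star_control_problem e N l lstar T
  for e :: "nat \<Rightarrow> 'a::euclidean_space" and N l lstar T +
  fixes x :: 'a and y :: "real \<Rightarrow> 'a" and \<alpha> :: "real \<Rightarrow> nat \<times> real"
  assumes traj: "(y, \<alpha>) \<in> Gamma e N 0 T x"
begin

definition energy :: real where
  "energy = (LINT s:{0..T}|lebesgue. (snd (\<alpha> s))\<^sup>2)"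

definition speed :: "real \<Rightarrow> real" where
  "speed \<delta> = T / (T - \<delta>)"

definition shifted_cost :: "real \<Rightarrow> real" where
  "shifted_cost \<delta> = (LINT \<tau>:{0..T}|lebesgue. LL (y \<tau>) (\<delta> + \<tau> / speed \<delta>))"

definition approach :: "'a \<Rightarrow> real \<Rightarrow> (real \<Rightarrow> 'a) \<Rightarrow> (real \<Rightarrow> nat \<times> real) \<Rightarrow> bool" where
  "approach z \<delta> p \<beta> \<longleftrightarrow> (p, \<beta>) \<in> Gamma e N 0 \<delta> z \<and> p \<delta> = x \<and> (\<forall>\<tau>. \<bar>snd (\<beta> \<tau>)\<bar> \<le> 1)"

definition glued_traj :: "real \<Rightarrow> (real \<Rightarrow> 'a) \<Rightarrow> real \<Rightarrow> 'a" where
  "glued_traj \<delta> p = (\<lambda>s. if s \<le> \<delta> then p s else y (speed \<delta> * (s - \<delta>)))"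

definition glued_ctrl :: "real \<Rightarrow> (real \<Rightarrow> nat \<times> real) \<Rightarrow> real \<Rightarrow> nat \<times> real" where
  "glued_ctrl \<delta> \<beta> = (\<lambda>s. if s \<le> \<delta> then \<beta> s
     else (fst (\<alpha> (speed \<delta> * (s - \<delta>))), speed \<delta> * snd (\<alpha> (speed \<delta> * (s - \<delta>)))))"

lemma energy_nonneg: "energy \<ge> 0"
  unfolding energy_def set_lebesgue_integral_def by (simp add: integral_nonneg_AE indicator_def)

lemma speed_pos: "\<delta> < T \<Longrightarrow> speed \<delta> > 0"
  using T_pos unfolding speed_def by simp

lemma speed_ge_1: "0 \<le> \<delta> \<Longrightarrow> \<delta> < T \<Longrightarrow> speed \<delta> \<ge> 1"
  unfolding speed_def by (simp add: field_simps)

lemma speed_end: "\<delta> < T \<Longrightarrow> \<delta> + T / speed \<delta> = T"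
  using T_pos unfolding speed_def by (simp add: field_simps)

lemma shift_in_range:
  assumes "0 \<le> \<delta>" "\<delta> < T" "\<tau> \<in> {0..T}"
  shows "\<delta> + \<tau> / speed \<delta> \<in> {0..T}"
proof -
  have "\<tau> / speed \<delta> \<le> T / speed \<delta>" using assms speed_pos[of \<delta>] by (intro divide_right_mono) auto
  thus ?thesis using assms speed_pos[of \<delta>] speed_end[of \<delta>] by auto
qed

lemma shifted_cost_integrable:
  "0 \<le> \<delta> \<Longrightarrow> \<delta> < T \<Longrightarrow> set_integrable lebesgue {0..T} (\<lambda>\<tau>. LL (y \<tau>) (\<delta> + \<tau> / speed \<delta>))"
  using Gamma_continuous_on[OF traj] GammaD(1)[OF traj] shift_in_range speed_pos[of \<delta>]
  by (intro Lcost_path_integrable continuous_intros) auto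

lemma glued_in_Gamma:
  assumes "approach z \<delta> p \<beta>" "0 \<le> \<delta>" "\<delta> < T"
  shows "(glued_traj \<delta> p, glued_ctrl \<delta> \<beta>) \<in> Gamma e N 0 T z"
proof -
  have "(\<lambda>s. y (speed \<delta> * (s - \<delta>)), \<lambda>s. (fst (\<alpha> (speed \<delta> * (s - \<delta>))), speed \<delta> * snd (\<alpha> (speed \<delta> * (s - \<delta>)))))
      \<in> Gamma e N \<delta> T (p \<delta>)"
    using Gamma_rescale[OF traj speed_pos[OF \<open>\<delta> < T\<close>], of \<delta>] assms
    unfolding speed_end[OF \<open>\<delta> < T\<close>] approach_def by simp
  thus ?thesis
    using assms Gamma_join[of p \<beta> 0 \<delta> z] unfolding approach_def glued_traj_def glued_ctrl_def by auto
qed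

lemma glued_traj_end: "\<delta> < T \<Longrightarrow> glued_traj \<delta> p T = y T"
  using T_pos unfolding glued_traj_def speed_def by simp

lemma approach_gdist_le:
  assumes A: "approach z \<delta> p \<beta>" and s: "s \<in> {0..\<delta>}"
  shows "gdist e N (p s) x \<le> \<delta>"
proof -
  have P: "(p, \<beta>) \<in> Gamma e N 0 \<delta> z" and "p \<delta> = x" and \<beta>: "\<And>\<tau>. \<bar>snd (\<beta> \<tau>)\<bar> \<le> 1"
    using A unfolding approach_def by auto
  have "gdist e N (p s) (p \<delta>) \<le> (LINT t:{s..\<delta>}|lebesgue. \<bar>snd (\<beta> t)\<bar>)"
    using Gamma_gdist_le[OF P] s by auto
  also have "\<dots> \<le> (LINT t:{s..\<delta>}|lebesgue. 1)"
    using Gamma_abs_control_integrable[OF P] s \<beta>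
    by (intro set_integral_mono) (auto simp: absolutely_integrable_on_const)
  also have "\<dots> \<le> \<delta>" using s by (simp add: set_integral_const)
  finally show ?thesis using \<open>p \<delta> = x\<close> by simp
qed

lemma glued_gdist_le:
  assumes A: "approach z \<delta> p \<beta>" and \<delta>: "0 \<le> \<delta>" "\<delta> < T" and s: "s \<in> {0..T}"
  shows "gdist e N (glued_traj \<delta> p s) (y s) \<le> \<delta> + sqrt energy * sqrt \<delta>"
proof (cases "s \<le> \<delta>")
  case True
  have "gdist e N (y 0) (y s) \<le> sqrt (energy * (s - 0))"
    using Gamma_gdist_le_sqrt[OF traj, of 0 s] s unfolding energy_def by auto
  also have "\<dots> \<le> sqrt energy * sqrt \<delta>"
    using True energy_nonneg by (simp add: real_sqrt_mult mult_left_mono)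
  finally have "gdist e N x (y s) \<le> sqrt energy * sqrt \<delta>"
    using Gamma_start[OF traj] T_pos by simp
  moreover have "gdist e N (p s) x \<le> \<delta>" using approach_gdist_le[OF A] s True by simp
  ultimately show ?thesis
    using gdist_triangle[of "p s" "y s" x] True unfolding glued_traj_def by simp
next
  case False
  define \<sigma> where "\<sigma> = speed \<delta> * (s - \<delta>)"
  have "\<sigma> \<le> s"
  proof -
    have "\<delta> * s \<le> \<delta> * T" using s \<delta> by (intro mult_left_mono) auto
    thus ?thesis using \<delta> unfolding \<sigma>_def speed_def by (simp add: field_simps)
  qed
  moreover have "0 \<le> \<sigma>" unfolding \<sigma>_def using False speed_pos[OF \<delta>(2)] by simp
  moreover have "s - \<sigma> \<le> \<delta>"
    using False speed_ge_1[OF \<delta>] mult_left_mono[of 1 "speed \<delta>" "s - \<delta>"]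
    unfolding \<sigma>_def by (simp add: algebra_simps)
  ultimately have "gdist e N (y \<sigma>) (y s) \<le> sqrt (energy * \<delta>)"
    using Gamma_gdist_le_sqrt[OF traj, of \<sigma> s] s energy_nonneg unfolding energy_def
    by (smt (verit) mult_left_mono real_sqrt_le_mono atLeastAtMost_iff)
  thus ?thesis using False \<delta> unfolding glued_traj_def \<sigma>_def by (simp add: real_sqrt_mult)
qed

lemma integral_rescaled_tail:
  fixes F :: "real \<Rightarrow> real"
  assumes "\<delta> < T"
  shows "(LINT s:{\<delta>..T}|lebesgue. F (speed \<delta> * (s - \<delta>))) = (LINT \<tau>:{0..T}|lebesgue. F \<tau>) / speed \<delta>"
  using set_integral_real_affine(2)[OF speed_pos[OF assms], of \<delta> T F] speed_end[OF assms] by simp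

lemma glued_energy:
  assumes A: "approach z \<delta> p \<beta>" and \<delta>: "0 \<le> \<delta>" "\<delta> < T"
  obtains E where "(LINT s:{0..T}|lebesgue. (snd (glued_ctrl \<delta> \<beta> s))\<^sup>2) = E + speed \<delta> * energy"
    and "0 \<le> E" "E \<le> \<delta>"
proof
  have P: "(p, \<beta>) \<in> Gamma e N 0 \<delta> z" and \<beta>: "\<And>\<tau>. \<bar>snd (\<beta> \<tau>)\<bar> \<le> 1"
    using A unfolding approach_def by auto
  let ?c = "speed \<delta>"
  have tail: "set_integrable lebesgue {\<delta>..T} (\<lambda>s. ?c\<^sup>2 * (snd (\<alpha> (?c * (s - \<delta>))))\<^sup>2)"
    using set_integral_real_affine(1)[OF speed_pos[OF \<delta>(2)], of \<delta> T "\<lambda>\<tau>. (snd (\<alpha> \<tau>))\<^sup>2"]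
      GammaD(5)[OF traj] speed_end[OF \<delta>(2)] by (intro set_integrable_mult_right) simp
  have "(LINT s:{0..T}|lebesgue. (snd (glued_ctrl \<delta> \<beta> s))\<^sup>2)
      = (LINT s:{0..T}|lebesgue. if s \<le> \<delta> then (snd (\<beta> s))\<^sup>2 else ?c\<^sup>2 * (snd (\<alpha> (?c * (s - \<delta>))))\<^sup>2)"
    unfolding glued_ctrl_def by (intro set_lebesgue_integral_cong) (auto simp: power_mult_distrib)
  also have "\<dots> = (LINT s:{0..\<delta>}|lebesgue. (snd (\<beta> s))\<^sup>2) + ?c\<^sup>2 * (energy / ?c)"
    using set_integral_Icc_join(2)[OF GammaD(5)[OF P] tail \<delta>(1) less_imp_le[OF \<delta>(2)]]
      integral_rescaled_tail[OF \<delta>(2), of "\<lambda>\<tau>. (snd (\<alpha> \<tau>))\<^sup>2"]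
    unfolding energy_def by simp
  also have "?c\<^sup>2 * (energy / ?c) = ?c * energy"
    using speed_pos[OF \<delta>(2)] by (simp add: power2_eq_square)
  finally show "(LINT s:{0..T}|lebesgue. (snd (glued_ctrl \<delta> \<beta> s))\<^sup>2)
      = (LINT s:{0..\<delta>}|lebesgue. (snd (\<beta> s))\<^sup>2) + ?c * energy" .
  show "0 \<le> (LINT s:{0..\<delta>}|lebesgue. (snd (\<beta> s))\<^sup>2)"
    unfolding set_lebesgue_integral_def by (simp add: integral_nonneg_AE indicator_def)
  have "(LINT s:{0..\<delta>}|lebesgue. (snd (\<beta> s))\<^sup>2) \<le> (LINT s:{0..\<delta>}|lebesgue. 1)"
    using GammaD(5)[OF P] \<beta> abs_square_le_1
    by (intro set_integral_mono) (auto simp: absolutely_integrable_on_const)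
  thus "(LINT s:{0..\<delta>}|lebesgue. (snd (\<beta> s))\<^sup>2) \<le> \<delta>" using \<delta> by (simp add: set_integral_const)
qed

lemma glued_running_cost:
  assumes A: "approach z \<delta> p \<beta>" and \<delta>: "0 \<le> \<delta>" "\<delta> < T"
    and B: "\<And>z t. z \<in> netw e N \<Longrightarrow> t \<in> {0..T} \<Longrightarrow> \<bar>LL z t\<bar> \<le> B"
  shows "\<bar>(LINT s:{0..T}|lebesgue. LL (glued_traj \<delta> p s) s) - shifted_cost \<delta> / speed \<delta>\<bar> \<le> B * \<delta>"
proof -
  have P: "(p, \<beta>) \<in> Gamma e N 0 \<delta> z" using A unfolding approach_def by auto
  let ?c = "speed \<delta>" and ?F = "\<lambda>\<tau>. LL (y \<tau>) (\<delta> + \<tau> / speed \<delta>)"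
  have head: "set_integrable lebesgue {0..\<delta>} (\<lambda>s. LL (p s) s)"
    using Gamma_continuous_on[OF P] GammaD(1)[OF P] \<delta>
    by (intro Lcost_path_integrable continuous_intros) auto
  have F: "?F (?c * (s - \<delta>)) = LL (y (?c * (s - \<delta>))) s" for s
    using speed_pos[OF \<delta>(2)] by simp
  have tail: "set_integrable lebesgue {\<delta>..T} (\<lambda>s. LL (y (?c * (s - \<delta>))) s)"
    using set_integral_real_affine(1)[OF speed_pos[OF \<delta>(2)], of \<delta> T ?F]
      shifted_cost_integrable[OF \<delta>] speed_end[OF \<delta>(2)] unfolding F by simp
  have "(LINT s:{0..T}|lebesgue. LL (glued_traj \<delta> p s) s)
      = (LINT s:{0..T}|lebesgue. if s \<le> \<delta> then LL (p s) s else LL (y (?c * (s - \<delta>))) s)"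
    unfolding glued_traj_def by (intro set_lebesgue_integral_cong) auto
  also have "\<dots> = (LINT s:{0..\<delta>}|lebesgue. LL (p s) s) + shifted_cost \<delta> / ?c"
    using set_integral_Icc_join(2)[OF head tail \<delta>(1) less_imp_le[OF \<delta>(2)]]
      integral_rescaled_tail[OF \<delta>(2), of ?F] unfolding F shifted_cost_def by simp
  finally have "(LINT s:{0..T}|lebesgue. LL (glued_traj \<delta> p s) s) - shifted_cost \<delta> / ?c
      = (LINT s:{0..\<delta>}|lebesgue. LL (p s) s)" by simp
  also have "\<bar>\<dots>\<bar> \<le> (LINT s:{0..\<delta>}|lebesgue. \<bar>LL (p s) s\<bar>)"
    using set_integral_norm_bound[OF head] by simp
  also have "\<dots> \<le> (LINT s:{0..\<delta>}|lebesgue. B)"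
    using head GammaD(1)[OF P] B \<delta>
    by (intro set_integral_mono) (auto simp: absolutely_integrable_on_const set_integrable_abs)
  also have "\<dots> = B * \<delta>" using \<delta> by (simp add: set_integral_const)
  finally show ?thesis .
qed

lemma speed_tendsto:
  assumes "d \<longlonglongrightarrow> 0" shows "(\<lambda>n. speed (d n)) \<longlonglongrightarrow> 1"
proof -
  have "(\<lambda>n. T / (T - d n)) \<longlonglongrightarrow> T / (T - 0)" using assms T_pos by (intro tendsto_intros) auto
  thus ?thesis using T_pos unfolding speed_def by simp
qed

lemma shifted_cost_tendsto:
  assumes lim: "d \<longlonglongrightarrow> 0" and nonneg: "\<And>n. 0 \<le> d n"
  shows "(\<lambda>n. shifted_cost (d n)) \<longlonglongrightarrow> (LINT \<tau>:{0..T}|lebesgue. LL (y \<tau>) \<tau>)"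
proof -
  (* Dominated convergence needs every term to be a shifted cost with shift below T; the clamped
     sequence d' agrees with d eventually. *)
  define d' where "d' n = min (d n) (T / 2)" for n
  have d': "0 \<le> d' n" "d' n < T" for n using nonneg T_pos by (auto simp: d'_def)
  have "d' \<longlonglongrightarrow> min 0 (T / 2)" unfolding d'_def by (intro tendsto_intros lim)
  hence lim': "d' \<longlonglongrightarrow> 0" using T_pos by simp
  obtain B where B: "\<And>z t. z \<in> netw e N \<Longrightarrow> t \<in> {0..T} \<Longrightarrow> \<bar>LL z t\<bar> \<le> B"
    using Lcost_bound by blast
  have "(\<lambda>n. shifted_cost (d' n)) \<longlonglongrightarrow> (LINT \<tau>:{0..T}|lebesgue. LL (y \<tau>) \<tau>)"
    unfolding shifted_cost_def set_lebesgue_integral_def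
  proof (rule integral_dominated_convergence[where w = "\<lambda>\<tau>. indicator {0..T} \<tau> *\<^sub>R B"])
    show "(\<lambda>\<tau>. indicator {0..T} \<tau> *\<^sub>R LL (y \<tau>) (d' n + \<tau> / speed (d' n))) \<in> borel_measurable lebesgue" for n
      using shifted_cost_integrable[OF d'] unfolding set_integrable_def by (rule borel_measurable_integrable)
    have "set_integrable lebesgue {0..T} (\<lambda>\<tau>. LL (y \<tau>) \<tau>)"
      using Gamma_continuous_on[OF traj] GammaD(1)[OF traj]
      by (intro Lcost_path_integrable continuous_intros) auto
    thus "(\<lambda>\<tau>. indicator {0..T} \<tau> *\<^sub>R LL (y \<tau>) \<tau>) \<in> borel_measurable lebesgue"
      unfolding set_integrable_def by (rule borel_measurable_integrable)
    show "integrable lebesgue (\<lambda>\<tau>. indicator {0..T} \<tau> *\<^sub>R B)"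
      using absolutely_integrable_on_const[of "{0..T}" B] unfolding set_integrable_def by simp
    show "AE \<tau> in lebesgue. norm (indicator {0..T} \<tau> *\<^sub>R LL (y \<tau>) (d' n + \<tau> / speed (d' n)))
        \<le> indicator {0..T} \<tau> *\<^sub>R B" for n
      using B GammaD(1)[OF traj] shift_in_range[OF d'] by (intro AE_I2) (auto simp: indicator_def)
    show "AE \<tau> in lebesgue. (\<lambda>n. indicator {0..T} \<tau> *\<^sub>R LL (y \<tau>) (d' n + \<tau> / speed (d' n)))
        \<longlonglongrightarrow> indicator {0..T} \<tau> *\<^sub>R LL (y \<tau>) \<tau>"
    proof (rule AE_I2)
      fix \<tau> :: real
      show "(\<lambda>n. indicator {0..T} \<tau> *\<^sub>R LL (y \<tau>) (d' n + \<tau> / speed (d' n)))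
          \<longlonglongrightarrow> indicator {0..T} \<tau> *\<^sub>R LL (y \<tau>) \<tau>"
      proof (cases "\<tau> \<in> {0..T}")
        case True
        have "(\<lambda>n. d' n + \<tau> / speed (d' n)) \<longlonglongrightarrow> 0 + \<tau> / 1"
          by (intro tendsto_intros lim' speed_tendsto) simp
        hence "(\<lambda>n. LL (y \<tau>) (d' n + \<tau> / speed (d' n))) \<longlonglongrightarrow> LL (y \<tau>) \<tau>"
          using True shift_in_range[OF d'] GammaD(1)[OF traj]
          by (intro continuous_on_tendsto_compose[OF Lcost_continuous_on]) auto
        thus ?thesis by (intro tendsto_intros)
      qed simp
    qed
  qed
  moreover have "eventually (\<lambda>n. shifted_cost (d' n) = shifted_cost (d n)) sequentially"
    using order_tendstoD(2)[OF lim, of "T / 2"] T_pos by (auto simp: d'_def elim: eventually_mono)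
  ultimately show ?thesis by (rule Lim_transform_eventually)
qed

lemma glued_running_cost_tendsto:
  assumes A: "\<And>n. approach (z n) (d n) (p n) (\<beta> n)" and lim: "d \<longlonglongrightarrow> 0" and nonneg: "\<And>n. 0 \<le> d n"
  shows "(\<lambda>n. LINT s:{0..T}|lebesgue. LL (glued_traj (d n) (p n) s) s)
           \<longlonglongrightarrow> (LINT \<tau>:{0..T}|lebesgue. LL (y \<tau>) \<tau>)"
proof -
  obtain B where B: "\<And>z t. z \<in> netw e N \<Longrightarrow> t \<in> {0..T} \<Longrightarrow> \<bar>LL z t\<bar> \<le> B"
    using Lcost_bound by blast
  let ?L = "\<lambda>n. LINT s:{0..T}|lebesgue. LL (glued_traj (d n) (p n) s) s"
    and ?M = "\<lambda>n. shifted_cost (d n) / speed (d n)"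
  have "(\<lambda>n. ?L n - ?M n) \<longlonglongrightarrow> 0"
  proof (rule Lim_null_comparison)
    show "eventually (\<lambda>n. norm (?L n - ?M n) \<le> B * d n) sequentially"
      using order_tendstoD(2)[OF lim T_pos]
      by eventually_elim (use glued_running_cost[OF A nonneg _ B] in auto)
    show "(\<lambda>n. B * d n) \<longlonglongrightarrow> 0" using tendsto_mult_right_zero[OF lim] .
  qed
  moreover have "?M \<longlonglongrightarrow> (LINT \<tau>:{0..T}|lebesgue. LL (y \<tau>) \<tau>) / 1"
    by (intro tendsto_intros shifted_cost_tendsto speed_tendsto lim nonneg) simp
  ultimately show ?thesis using tendsto_add[of "\<lambda>n. ?L n - ?M n" 0 _ ?M] by simp
qed

lemma glued_energy_tendsto:
  assumes A: "\<And>n. approach (z n) (d n) (p n) (\<beta> n)" and lim: "d \<longlonglongrightarrow> 0" and nonneg: "\<And>n. 0 \<le> d n"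
  shows "(\<lambda>n. LINT s:{0..T}|lebesgue. (snd (glued_ctrl (d n) (\<beta> n) s))\<^sup>2) \<longlonglongrightarrow> energy"
proof (rule tendsto_sandwich)
  have "speed (d n) * energy \<le> (LINT s:{0..T}|lebesgue. (snd (glued_ctrl (d n) (\<beta> n) s))\<^sup>2)
      \<and> (LINT s:{0..T}|lebesgue. (snd (glued_ctrl (d n) (\<beta> n) s))\<^sup>2) \<le> d n + speed (d n) * energy"
    if "d n < T" for n
    using glued_energy[OF A nonneg that] by (metis add_le_cancel_right le_add_same_cancel2)
  thus "eventually (\<lambda>n. speed (d n) * energy
          \<le> (LINT s:{0..T}|lebesgue. (snd (glued_ctrl (d n) (\<beta> n) s))\<^sup>2)) sequentially"
    "eventually (\<lambda>n. (LINT s:{0..T}|lebesgue. (snd (glued_ctrl (d n) (\<beta> n) s))\<^sup>2)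
          \<le> d n + speed (d n) * energy) sequentially"
    using order_tendstoD(2)[OF lim T_pos] by (auto elim: eventually_mono)
  show "(\<lambda>n. speed (d n) * energy) \<longlonglongrightarrow> energy"
    using tendsto_mult_right[OF speed_tendsto[OF lim], of energy] by simp
  show "(\<lambda>n. d n + speed (d n) * energy) \<longlonglongrightarrow> energy"
    using tendsto_add[OF lim tendsto_mult_right[OF speed_tendsto[OF lim], of energy]] by simp
qed

lemma Jcost_glued_tendsto:
  assumes A: "\<And>n. approach (z n) (d n) (p n) (\<beta> n)" and lim: "d \<longlonglongrightarrow> 0" and nonneg: "\<And>n. 0 \<le> d n"
  shows "(\<lambda>n. Jcost e N l lstar g gstar T 0 (glued_traj (d n) (p n), glued_ctrl (d n) (\<beta> n)))
           \<longlonglongrightarrow> Jcost e N l lstar g gstar T 0 (y, \<alpha>)"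
proof (rule Lim_transform_eventually)
  show "(\<lambda>n. (LINT s:{0..T}|lebesgue. LL (glued_traj (d n) (p n) s) s)
      + 1/2 * (LINT s:{0..T}|lebesgue. (snd (glued_ctrl (d n) (\<beta> n) s))\<^sup>2) + gcost e N g gstar (y T))
      \<longlonglongrightarrow> Jcost e N l lstar g gstar T 0 (y, \<alpha>)"
    unfolding Jcost_eq[OF traj] energy_def[symmetric]
    by (intro tendsto_intros glued_running_cost_tendsto[OF A lim nonneg] glued_energy_tendsto[OF A lim nonneg])
  show "eventually (\<lambda>n. (LINT s:{0..T}|lebesgue. LL (glued_traj (d n) (p n) s) s)
      + 1/2 * (LINT s:{0..T}|lebesgue. (snd (glued_ctrl (d n) (\<beta> n) s))\<^sup>2) + gcost e N g gstar (y T)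
      = Jcost e N l lstar g gstar T 0 (glued_traj (d n) (p n), glued_ctrl (d n) (\<beta> n))) sequentially"
    using order_tendstoD(2)[OF lim T_pos]
    by eventually_elim (simp add: Jcost_eq[OF glued_in_Gamma[OF A nonneg]] glued_traj_end)
qed

lemma L2norm_reference: "L2norm \<alpha> 0 T = sqrt energy"
  unfolding L2norm_def energy_def ..

lemma glued_L2norm_le:
  assumes A: "approach z \<delta> p \<beta>" and \<delta>: "0 \<le> \<delta>" "\<delta> < T"
  shows "(L2norm (glued_ctrl \<delta> \<beta>) 0 T)\<^sup>2
           \<le> (L2norm \<alpha> 0 T)\<^sup>2 + \<delta> * (1 + (L2norm \<alpha> 0 T)\<^sup>2 / (T - \<delta>))"
proof -
  obtain E where E: "(L2norm (glued_ctrl \<delta> \<beta>) 0 T)\<^sup>2 = E + speed \<delta> * energy" "E \<le> \<delta>"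
    using glued_energy[OF A \<delta>] unfolding L2norm_square by blast
  have "speed \<delta> * energy = energy + \<delta> * energy / (T - \<delta>)"
    using \<delta> unfolding speed_def by (simp add: field_simps)
  thus ?thesis using E energy_nonneg unfolding L2norm_square energy_def[symmetric]
    by (simp add: algebra_simps)
qed

end

theorem mainTheorem3:
  fixes e :: "nat \<Rightarrow> 'a::euclidean_space" and N :: nat and T :: real
    and l :: "nat \<Rightarrow> 'a \<Rightarrow> real \<Rightarrow> real" and lstar :: "real \<Rightarrow> real"
    and g :: "nat \<Rightarrow> 'a \<Rightarrow> real" and gstar :: real
    and x :: 'a and y :: "real \<Rightarrow> 'a" and \<alpha> :: "real \<Rightarrow> nat \<times> real"
    and xs :: "nat \<Rightarrow> 'a"
  assumes N2: "N \<ge> 2"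
    and e_unit: "\<forall>i\<in>{1..N}. norm (e i) = 1"
    and e_inj: "inj_on e {1..N}"
    and T_pos: "T > 0"
    and l_cont: "\<forall>i\<in>{1..N}. continuous_on (ray (e i) \<times> {0..T}) (\<lambda>(z, t). l i z t)"
    and l_bdd: "\<forall>i\<in>{1..N}. bounded ((\<lambda>(z, t). l i z t) ` (ray (e i) \<times> {0..T}))"
    and g_cont: "\<forall>i\<in>{1..N}. continuous_on (ray (e i)) (g i)"
    and g_bdd: "\<forall>i\<in>{1..N}. bounded (g i ` ray (e i))"
    and lstar_cont: "continuous_on {0..T} lstar"
    and lstar_bdd: "bounded (lstar ` {0..T})"
    and x_in: "x \<in> netw e N"
    and traj: "(y, \<alpha>) \<in> Gamma e N 0 T x"
    and xs_in: "\<forall>n. xs n \<in> netw e N"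
    and conv: "(\<lambda>n. gdist e N (xs n) x) \<longlonglongrightarrow> 0"
  shows "\<exists>yn \<alpha>n.
     (\<forall>n. gdist e N (xs n) x < T \<longrightarrow>
        (yn n, \<alpha>n n) \<in> Gamma e N 0 T (xs n) \<and>
        (\<forall>s\<in>{0..T}. gdist e N (yn n s) (y s)
            \<le> gdist e N (xs n) x + L2norm \<alpha> 0 T * sqrt (gdist e N (xs n) x)) \<and>
        yn n T = y T \<and>
        (L2norm (\<alpha>n n) 0 T)\<^sup>2 \<le> (L2norm \<alpha> 0 T)\<^sup>2
            + gdist e N (xs n) x * (1 + (L2norm \<alpha> 0 T)\<^sup>2 / (T - gdist e N (xs n) x))) \<and>
     (\<lambda>n. Jcost e N l lstar g gstar T 0 (yn n, \<alpha>n n))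
        \<longlonglongrightarrow> Jcost e N l lstar g gstar T 0 (y, \<alpha>)"
proof -
  interpret reference_trajectory e N l lstar T x y \<alpha>
    by unfold_locales (use e_unit e_inj N2 T_pos l_cont l_bdd lstar_cont lstar_bdd traj in auto)
  define d where "d = (\<lambda>n. gdist e N (xs n) x)"
  have d_nonneg: "0 \<le> d n" for n unfolding d_def by (rule gdist_nonneg)
  have "\<forall>n. \<exists>p \<beta>. approach (xs n) (d n) p \<beta>"
    using geodesic_exists[OF xs_in[rule_format] x_in] unfolding approach_def d_def by blast
  then obtain p \<beta> where A: "\<And>n. approach (xs n) (d n) (p n) (\<beta> n)" by metis
  show ?thesis
  proof (intro exI conjI allI impI)
    fix n assume "gdist e N (xs n) x < T"
    hence "d n < T" unfolding d_def .
    show "(glued_traj (d n) (p n), glued_ctrl (d n) (\<beta> n)) \<in> Gamma e N 0 T (xs n)"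
      by (rule glued_in_Gamma[OF A d_nonneg \<open>d n < T\<close>])
    show "\<forall>s\<in>{0..T}. gdist e N (glued_traj (d n) (p n) s) (y s)
        \<le> gdist e N (xs n) x + L2norm \<alpha> 0 T * sqrt (gdist e N (xs n) x)"
      using glued_gdist_le[OF A d_nonneg \<open>d n < T\<close>] unfolding L2norm_reference d_def by blast
    show "glued_traj (d n) (p n) T = y T" by (rule glued_traj_end[OF \<open>d n < T\<close>])
    show "(L2norm (glued_ctrl (d n) (\<beta> n)) 0 T)\<^sup>2 \<le> (L2norm \<alpha> 0 T)\<^sup>2
        + gdist e N (xs n) x * (1 + (L2norm \<alpha> 0 T)\<^sup>2 / (T - gdist e N (xs n) x))"
      using glued_L2norm_le[OF A d_nonneg \<open>d n < T\<close>] unfolding d_def .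
  next
    show "(\<lambda>n. Jcost e N l lstar g gstar T 0 (glued_traj (d n) (p n), glued_ctrl (d n) (\<beta> n)))
        \<longlonglongrightarrow> Jcost e N l lstar g gstar T 0 (y, \<alpha>)"
      using Jcost_glued_tendsto[OF A _ d_nonneg] conv unfolding d_def by simp
  qed
qed

end
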